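(* Let $m$ be a positive integer, $x$ a positive integer and $r\in\{0,\dots,m-1\}$, and write $x_k=x_k(x,r)$, $r_k=r_k(x,r)$. For any integers $n,j$ with $n\ge1$ and $0\le j\le n$, $$(m+1)^{j}\big((m+1)x_{n-j}+r_{n-j}\big)\equiv \sum_{k=n-j+1}^{n}(m+1)^{n-k}m^{k-1+j-n}r_k \pmod{m^{j}}.$$ In particular, $(m+1)^n\big((m+1)x+r\big)\equiv\sum_{k=1}^n(m+1)^{n-k}m^{k-1}r_k\pmod{m^n}$ for every positive integer $n$.
   Context: Fix a positive integer $m$. The triangle $T_m$ is an array whose row $x$ ($x=1,2,\dots$) has $x$ entries, in columns $0,\dots,x-1$. Row $1$ is the single entry $1$. For $x>1$, row $x$ is obtained from row $x-1$ by rotating it cyclically left by $m$ positions (the entry in column $c$ of row $x-1$ moves to column $(c-m)\bmod(x-1)\in\{0,\dots,x-2\}$ of row $x$), then appending in column $x-1$ a new entry equal to $1$ plus the entry in column $0$ of row $x-1$. Entries are individual objects keeping their identity as they move. Tracking: for a positive integer $x$ and $r\in\{0,\dots,m-1\}$, follow the individual entry in row $x$, column $r\bmod x$. Let $(x_0,r_0),(x_1,r_1),\dots$ be the list, in strictly increasing lexicographic order, of all integer pairs $(y,c)$ with $y\ge x$, $0\le c\le m-1$, $(y,c)\ge (x,r)$ lexicographically, such that the tracked entry occupies column $c\bmod y$ of row $y$ (so $x_0=x$, $r_0=r$). Write $x_n(x,r)=x_n$, $r_n(x,r)=r_n$. *)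

theory Defs
  imports Main "HOL-Library.Product_Lexorder" "HOL-Library.Infinite_Set" "HOL-Number_Theory.Cong"
begin

text \<open>Column occupied, in row x + k of the triangle T_m, by the individual entry that sits in
  row x, column r mod x.  Passing from row y to row y+1 the entry in column c moves to
  column (c - m) mod y; entries are never removed.\<close>
fun tpos :: "nat \<Rightarrow> nat \<Rightarrow> nat \<Rightarrow> nat \<Rightarrow> nat" where
  "tpos m x r 0 = r mod x"
| "tpos m x r (Suc k) = nat ((int (tpos m x r k) - int m) mod int (x + k))"

definition track_set :: "nat \<Rightarrow> nat \<Rightarrow> nat \<Rightarrow> (nat \<times> nat) set" where
  "track_set m x r = {(y, c). x \<le> y \<and> c < m \<and> (x, r) \<le> (y, c) \<and> tpos m x r (y - x) = c mod y}"

text \<open>(x_n, r_n): the n-th element (from 0) of track_set in increasing lexicographic order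
  (the order on pairs is the lexicographic one from Product_Lexorder).\<close>
definition xseq :: "nat \<Rightarrow> nat \<Rightarrow> nat \<Rightarrow> nat \<Rightarrow> nat" where
  "xseq m x r n = fst (enumerate (track_set m x r) n)"

definition rseq :: "nat \<Rightarrow> nat \<Rightarrow> nat \<Rightarrow> nat \<Rightarrow> nat" where
  "rseq m x r n = snd (enumerate (track_set m x r) n)"

end

theory Submission
  imports Defs
begin

text \<open>If the entry is tracked at (y, c), the next tracked pair (y', c') is determined by
  m y' + c' = (m+1) y + c with c' < m: either c + y < m and the entry is caught again in row y
  at c + y, or its column drops by m per row until, (y + c) div m rows later, it is caught in
  column (y + c) mod m.  Unrolling the recurrence m x_(k+1) + r_(k+1) = (m+1) x_k + r_k
  j times gives an exact identity whose only other term is a multiple of m^j.\<close>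

lemma tpos_Suc_diff:
  "x \<le> y \<Longrightarrow> tpos m x r (Suc y - x) = nat ((int (tpos m x r (y - x)) - int m) mod int y)"
  by (simp add: Suc_diff_le)

lemma tpos_less:
  assumes "0 < x"
  shows "tpos m x r k < x + k"
proof (cases k)
  case (Suc k')
  have "(int (tpos m x r k') - int m) mod int (x + k') < int (x + k')"
    using assms by (intro pos_mod_bound) simp
  then show ?thesis
    using Suc by (simp add: nat_less_iff)
qed (use assms in simp)

lemma tpos_Suc_diff_of_mod_eq:
  assumes "x \<le> y" and "tpos m x r (y - x) mod y = c mod y" and "m \<le> c" and "c < m + y"
  shows "tpos m x r (Suc y - x) = c - m"
proof -
  have "(int (tpos m x r (y - x)) - int m) mod int y = (int c - int m) mod int y"
    by (metis assms(2) mod_diff_left_eq zmod_int)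
  also have "\<dots> = int c - int m"
    using assms(3,4) by (intro mod_pos_pos_trivial) auto
  finally show ?thesis
    using tpos_Suc_diff[OF assms(1)] assms(3) by simp
qed

text \<open>The first rotation wraps column c mod y around to c + y - m; afterwards the column
  simply drops by m per row as long as it stays at least m.\<close>
lemma tpos_descent:
  assumes "x \<le> y" and "tpos m x r (y - x) = c mod y" and "c < m"
  shows "Suc t * m \<le> y + c \<Longrightarrow> tpos m x r (y + Suc t - x) = y + c - Suc t * m"
proof (induction t)
  case 0
  have "tpos m x r (y - x) mod y = (c + y) mod y"
    using assms(2) by simp
  from tpos_Suc_diff_of_mod_eq[OF assms(1) this] 0 assms(3) show ?case
    by (simp add: add.commute)
next
  case (Suc t)
  let ?p = "y + c - Suc t * m"
  have "tpos m x r (y + Suc t - x) = ?p"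
    using Suc by simp
  then have "tpos m x r (y + Suc t - x) mod (y + Suc t) = ?p mod (y + Suc t)"
    by simp
  from tpos_Suc_diff_of_mod_eq[OF _ this] assms Suc.prems show ?case
    by (simp add: Suc_diff_le algebra_simps)
qed

lemma mod_eq_imp_add_le:
  fixes c d y :: nat
  assumes "c < d" and "d mod y = c mod y"
  shows "c + y \<le> d"
proof -
  have "y dvd d - c"
    using assms mod_eq_dvd_iff_nat[of c d y] by simp
  then have "y \<le> d - c"
    using assms(1) by (intro dvd_imp_le) auto
  then show ?thesis
    using assms(1) by simp
qed

lemma track_set_same_row:
  assumes "(y, c) \<in> track_set m x r" and "(y, d) \<in> track_set m x r" and "c < d"
  shows "c + y \<le> d"
  using assms by (intro mod_eq_imp_add_le) (auto simp: track_set_def)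

definition track_next :: "nat \<Rightarrow> nat \<times> nat \<Rightarrow> nat \<times> nat" where
  "track_next m p = (case p of (y, c) \<Rightarrow> (((m + 1) * y + c) div m, ((m + 1) * y + c) mod m))"

lemma track_next_eq:
  assumes "0 < m"
  shows "track_next m (y, c) = (y + (y + c) div m, (y + c) mod m)"
proof -
  have "(m + 1) * y + c = (y + c) + y * m"
    by (simp add: algebra_simps)
  then show ?thesis
    using assms by (simp only: track_next_def prod.case) simp
qed

lemma track_next_mem:
  assumes "0 < m" and "0 < x" and yc: "(y, c) \<in> track_set m x r"
  shows "track_next m (y, c) \<in> track_set m x r"
proof -
  have xy: "x \<le> y" and cm: "c < m" and start: "(x, r) \<le> (y, c)"
    and P: "tpos m x r (y - x) = c mod y"
    using yc by (auto simp: track_set_def)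
  show ?thesis
  proof (cases "(y + c) div m")
    case 0
    then have "y + c < m"
      using assms(1) by (simp add: div_eq_0_iff)
    then show ?thesis
      using 0 xy start P by (auto simp: track_set_def track_next_eq[OF assms(1)] less_eq_prod_def)
  next
    case (Suc s)
    have "Suc s * m \<le> y + c"
      by (metis Suc div_times_less_eq_dividend)
    then have "tpos m x r (y + Suc s - x) = (y + c) mod m"
      using tpos_descent[OF xy P cm] Suc by (metis minus_div_mult_eq_mod)
    moreover have "tpos m x r (y + Suc s - x) < y + Suc s"
      using tpos_less[OF assms(2), of m r "y + Suc s - x"] xy by simp
    ultimately show ?thesis
      using Suc xy start assms(1)
      by (auto simp: track_set_def track_next_eq[OF assms(1)] less_eq_prod_def)
  qed
qed

lemma track_next_greater:
  assumes "0 < m" and "0 < x" and "(y, c) \<in> track_set m x r"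
  shows "(y, c) < track_next m (y, c)"
proof -
  have "0 < y" and "c < m"
    using assms by (auto simp: track_set_def)
  then show ?thesis
    by (cases "(y + c) div m = 0")
      (use assms(1) in \<open>auto simp: track_next_eq[OF assms(1)] less_prod_def div_greater_zero_iff div_eq_0_iff\<close>)
qed

lemma track_next_least:
  assumes "0 < m" and yc: "(y, c) \<in> track_set m x r" and zd: "(z, d) \<in> track_set m x r"
    and less: "(y, c) < (z, d)"
  shows "track_next m (y, c) \<le> (z, d)"
proof -
  have xy: "x \<le> y" and cm: "c < m" and P: "tpos m x r (y - x) = c mod y"
    using yc by (auto simp: track_set_def)
  have dm: "d < m" and Pz: "tpos m x r (z - x) = d mod z"
    using zd by (auto simp: track_set_def)
  consider "z = y" | "y < z"
    using less by (cases "z = y") (auto simp: less_prod_def)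
  then show ?thesis
  proof cases
    case 1
    then have "c + y \<le> d"
      using track_set_same_row yc zd less by (auto simp: less_prod_def)
    then show ?thesis
      using 1 dm by (simp add: track_next_eq[OF assms(1)] less_eq_prod_def)
  next
    case 2
    show ?thesis
    proof (cases "(y + c) div m")
      case 0
      then show ?thesis
        using 2 by (simp add: track_next_eq[OF assms(1)] less_eq_prod_def)
    next
      case (Suc s)
      have tm: "Suc s * m \<le> y + c"
        by (metis Suc div_times_less_eq_dividend)
      have "\<not> z < y + Suc s"
      proof
        assume "z < y + Suc s"
        define u where "u = z - Suc y"
        have u: "z = y + Suc u" "u < s"
          using 2 \<open>z < y + Suc s\<close> by (auto simp: u_def)
        have "Suc (Suc u) * m \<le> Suc s * m"
          using u(2) by (intro mult_le_mono1) simp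
        then have "Suc (Suc u) * m \<le> y + c"
          using tm by linarith
        then have "m \<le> tpos m x r (z - x)"
          using tpos_descent[OF xy P cm, of u] u(1) by simp
        then show False
          using Pz dm mod_less_eq_dividend[of d z] by linarith
      qed
      moreover have "(y + c) mod m \<le> d" if "z = y + Suc s"
      proof -
        have "d mod z = y + c - Suc s * m"
          using tpos_descent[OF xy P cm tm] Pz that by simp
        also have "\<dots> = (y + c) mod m"
          using Suc by (simp add: minus_div_mult_eq_mod[symmetric])
        finally show ?thesis
          by (metis mod_less_eq_dividend)
      qed
      ultimately show ?thesis
        using Suc by (cases "z = y + Suc s") (auto simp: track_next_eq[OF assms(1)] less_eq_prod_def)
    qed
  qed
qed

lemma infinite_track_set:
  assumes "0 < m" and "0 < x" and "r < m"
  shows "infinite (track_set m x r)"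
proof (rule infinite_growing)
  have "(x, r) \<in> track_set m x r"
    using assms(3) by (simp add: track_set_def)
  then show "track_set m x r \<noteq> {}"
    by blast
next
  fix p assume "p \<in> track_set m x r"
  then show "\<exists>q\<in>track_set m x r. q > p"
    using track_next_mem[OF assms(1,2)] track_next_greater[OF assms(1,2)] by (cases p) blast
qed

lemma enumerate_track_set_0:
  assumes "r < m"
  shows "enumerate (track_set m x r) 0 = (x, r)"
  unfolding enumerate_0 using assms by (intro Least_equality) (auto simp: track_set_def)

lemma enumerate_track_set_Suc:
  assumes "0 < m" and "0 < x" and "r < m"
  shows "enumerate (track_set m x r) (Suc k) = track_next m (enumerate (track_set m x r) k)"
proof -
  let ?S = "track_set m x r"
  have inf: "infinite ?S"
    using infinite_track_set[OF assms] .
  obtain y c where e: "enumerate ?S k = (y, c)"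
    by (cases "enumerate ?S k")
  have yc: "(y, c) \<in> ?S"
    using enumerate_in_set[OF inf, of k] e by simp
  have "enumerate ?S (Suc k) = (LEAST q. q \<in> ?S \<and> (y, c) < q)"
    using enumerate_Suc''[OF inf, of k] e by simp
  also have "\<dots> = track_next m (y, c)"
    using track_next_mem[OF assms(1,2) yc] track_next_greater[OF assms(1,2) yc]
      track_next_least[OF assms(1) yc]
    by (intro Least_equality) auto
  finally show ?thesis
    using e by simp
qed

lemma xseq_rseq_recurrence:
  assumes "0 < m" and "0 < x" and "r < m"
  shows "m * xseq m x r (Suc k) + rseq m x r (Suc k) = (m + 1) * xseq m x r k + rseq m x r k"
  using enumerate_track_set_Suc[OF assms, of k]
  by (cases "enumerate (track_set m x r) k") (simp add: xseq_def rseq_def track_next_def)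

lemma weighted_recurrence_unfold:
  fixes M :: "'a::comm_ring_1" and X R :: "nat \<Rightarrow> 'a"
  assumes rec: "\<And>k. M * X (Suc k) + R (Suc k) = (M + 1) * X k + R k"
  shows "(M + 1) ^ j * ((M + 1) * X a + R a)
    = M ^ j * ((M + 1) * X (a + j) + R (a + j))
      + (\<Sum>k = a + 1..a + j. (M + 1) ^ (a + j - k) * M ^ (k - 1 - a) * R k)"
proof (induction j)
  case 0
  then show ?case by simp
next
  case (Suc j)
  let ?W = "\<lambda>k. (M + 1) * X k + R k"
  let ?S = "\<lambda>j. \<Sum>k = a + 1..a + j. (M + 1) ^ (a + j - k) * M ^ (k - 1 - a) * R k"
  have "?W (a + j) = M * X (a + Suc j) + R (a + Suc j)"
    using rec[of "a + j"] by simp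
  then have step: "(M + 1) * ?W (a + j) = M * ?W (a + Suc j) + R (a + Suc j)"
    by (simp add: algebra_simps)
  have "?S (Suc j) = (\<Sum>k = a + 1..a + j. (M + 1) ^ (a + Suc j - k) * M ^ (k - 1 - a) * R k)
      + M ^ j * R (a + Suc j)"
    by (simp add: sum.cl_ivl_Suc)
  also have "\<dots> = (M + 1) * ?S j + M ^ j * R (a + Suc j)"
    unfolding sum_distrib_left
    by (intro arg_cong2[where f = "(+)"] sum.cong) (auto simp: Suc_diff_le)
  finally have sum: "?S (Suc j) = (M + 1) * ?S j + M ^ j * R (a + Suc j)" .
  have "(M + 1) ^ Suc j * ?W a = (M + 1) * (M ^ j * ?W (a + j) + ?S j)"
    by (simp only: power_Suc mult.assoc Suc.IH)
  also have "\<dots> = M ^ j * ((M + 1) * ?W (a + j)) + (M + 1) * ?S j"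
    by (simp add: algebra_simps)
  also have "\<dots> = M ^ Suc j * ?W (a + Suc j) + ?S (Suc j)"
    unfolding step sum by (simp add: algebra_simps)
  finally show ?case .
qed

lemma weighted_recurrence_cong:
  fixes M :: int and X R :: "nat \<Rightarrow> int"
  assumes rec: "\<And>k. M * X (Suc k) + R (Suc k) = (M + 1) * X k + R k" and "j \<le> n"
  shows "[(M + 1) ^ j * ((M + 1) * X (n - j) + R (n - j))
    = (\<Sum>k = n - j + 1..n. (M + 1) ^ (n - k) * M ^ (k - 1 + j - n) * R k)] (mod M ^ j)"
proof -
  let ?a = "n - j"
  have "(\<Sum>k = n - j + 1..n. (M + 1) ^ (n - k) * M ^ (k - 1 + j - n) * R k)
      = (\<Sum>k = ?a + 1..?a + j. (M + 1) ^ (?a + j - k) * M ^ (k - 1 - ?a) * R k)"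
    using assms(2) by (intro sum.cong) auto
  moreover have "[M ^ j * ((M + 1) * X n + R n) + s = s] (mod M ^ j)" for s
    by (simp add: cong_iff_dvd_diff)
  ultimately show ?thesis
    using weighted_recurrence_unfold[where M = M and X = X and R = R and j = j and a = ?a, OF rec] assms(2) by simp
qed

theorem mainTheorem13:
  fixes m x r n j :: nat
  assumes "0 < m" and "0 < x" and "r < m" and "1 \<le> n" and "j \<le> n"
  shows "[int (m + 1) ^ j * (int (m + 1) * int (xseq m x r (n - j)) + int (rseq m x r (n - j)))
           = (\<Sum>k = n - j + 1..n. int (m + 1) ^ (n - k) * int m ^ (k - 1 + j - n) * int (rseq m x r k))]
           (mod int m ^ j) \<and>
         [int (m + 1) ^ n * (int (m + 1) * int x + int r)
           = (\<Sum>k = 1..n. int (m + 1) ^ (n - k) * int m ^ (k - 1) * int (rseq m x r k))]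
           (mod int m ^ n)"
proof -
  have "int m * int (xseq m x r (Suc k)) + int (rseq m x r (Suc k))
      = (int m + 1) * int (xseq m x r k) + int (rseq m x r k)" for k
    using arg_cong[OF xseq_rseq_recurrence[OF assms(1-3), of k], of int] by (simp add: algebra_simps)
  note cong = weighted_recurrence_cong[of "int m" "\<lambda>k. int (xseq m x r k)" "\<lambda>k. int (rseq m x r k)", OF this]
  have "xseq m x r 0 = x" and "rseq m x r 0 = r"
    using enumerate_track_set_0[OF assms(3)] by (simp_all add: xseq_def rseq_def)
  then show ?thesis
    using cong[OF assms(5)] cong[of n n] by (simp add: add.commute)
qed

end
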